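(* Let $d$ be a positive integer and let $A\in\mathbb{R}^{[2]\times[n]}$ be a matrix that cannot be eliminated at any column. Then there exists $b\in\mathbb{R}^{[2]}$ such that the solution graph $G(R(A,b))$ is not connected.
   Context: Fix a positive integer $d$ and let $D=\{0,1,\dots,d\}$; $[n]=\{1,\dots,n\}$. For $A\in\mathbb{R}^{[m]\times[n]}$ and $b\in\mathbb{R}^{[m]}$, $R(A,b)=\{x\in D^{[n]} : Ax\ge b\}$. For $R\subseteq D^{[n]}$, the solution graph $G(R)$ is the undirected graph with vertex set $R$ in which $x,y$ are adjacent iff they differ in exactly one coordinate. A matrix $A=(a_{ij})\in\mathbb{R}^{[m]\times[n]}$ can be eliminated at column $j\in[n]$ if (i) for every row $i$ with $a_{ij}>0$ we have $a_{ij'}=0$ for all $j'\in[n]\setminus\{j\}$, or (ii) for every row $i$ with $a_{ij}<0$ we have $a_{ij'}=0$ for all $j'\in[n]\setminus\{j\}$. *)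

theory Defs
  imports Complex_Main
begin

text \<open>Points of D^[n] with D = {0..d}: functions nat => nat whose values on {1..n}
  lie in {0..d} and which vanish outside {1..n} (extensional representation).\<close>
definition Dpts :: "nat \<Rightarrow> nat \<Rightarrow> (nat \<Rightarrow> nat) set" where
  "Dpts d n = {x. (\<forall>i\<in>{1..n}. x i \<le> d) \<and> (\<forall>i. i \<notin> {1..n} \<longrightarrow> x i = 0)}"

definition Rsol :: "nat \<Rightarrow> nat \<Rightarrow> nat \<Rightarrow> (nat \<Rightarrow> nat \<Rightarrow> real) \<Rightarrow> (nat \<Rightarrow> real) \<Rightarrow> (nat \<Rightarrow> nat) set" where
  "Rsol d m n A b = {x \<in> Dpts d n. \<forall>i\<in>{1..m}. (\<Sum>j=1..n. A i j * real (x j)) \<ge> b i}"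

definition adjacent :: "nat \<Rightarrow> (nat \<Rightarrow> nat) \<Rightarrow> (nat \<Rightarrow> nat) \<Rightarrow> bool" where
  "adjacent n x y \<longleftrightarrow> card {j\<in>{1..n}. x j \<noteq> y j} = 1"

definition sol_edges :: "nat \<Rightarrow> (nat \<Rightarrow> nat) set \<Rightarrow> ((nat \<Rightarrow> nat) \<times> (nat \<Rightarrow> nat)) set" where
  "sol_edges n R = {(x, y). x \<in> R \<and> y \<in> R \<and> adjacent n x y}"

definition sol_graph_connected :: "nat \<Rightarrow> (nat \<Rightarrow> nat) set \<Rightarrow> bool" where
  "sol_graph_connected n R \<longleftrightarrow> (\<forall>x\<in>R. \<forall>y\<in>R. (x, y) \<in> (sol_edges n R)\<^sup>*)"

definition can_eliminate :: "nat \<Rightarrow> nat \<Rightarrow> (nat \<Rightarrow> nat \<Rightarrow> real) \<Rightarrow> nat \<Rightarrow> bool" where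
  "can_eliminate m n A j \<longleftrightarrow>
     (\<forall>i\<in>{1..m}. A i j > 0 \<longrightarrow> (\<forall>j'\<in>{1..n} - {j}. A i j' = 0)) \<or>
     (\<forall>i\<in>{1..m}. A i j < 0 \<longrightarrow> (\<forall>j'\<in>{1..n} - {j}. A i j' = 0))"

end

theory Submission
  imports Defs
begin

(* Non-eliminability of a two-row matrix means that the two rows have strictly opposite signs in
   every column.  Let z be the corner of the box maximising the first row, hence minimising the
   second, and measure the deviation of x from z by the weighted l1 distances
   \<Sum>j |a_j| |x_j - z_j| (first row) and \<Sum>j |c_j| |x_j - z_j| (second row).
   Choose columns p \<noteq> q minimising |a_p| + |a_q|.  Bounding the first distance by
   max |a_p| |a_q| forces x to differ from z in at most one coordinate, and bounding the
   second one from below by min |c_p| |c_q| forces x \<noteq> z.  So every solution differs from z in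
   exactly one coordinate; this coordinate cannot change along an edge of the solution graph, and
   both unit moves of z in coordinates p and q are solutions. *)

definition diff_coords :: "nat \<Rightarrow> (nat \<Rightarrow> nat) \<Rightarrow> (nat \<Rightarrow> nat) \<Rightarrow> nat set" where
  "diff_coords n x y = {j\<in>{1..n}. x j \<noteq> y j}"

definition wdist :: "nat \<Rightarrow> (nat \<Rightarrow> real) \<Rightarrow> (nat \<Rightarrow> nat) \<Rightarrow> (nat \<Rightarrow> nat) \<Rightarrow> real" where
  "wdist n w x y = (\<Sum>j=1..n. \<bar>w j\<bar> * \<bar>real (x j) - real (y j)\<bar>)"

definition sign_corner :: "nat \<Rightarrow> nat \<Rightarrow> (nat \<Rightarrow> real) \<Rightarrow> nat \<Rightarrow> nat" where
  "sign_corner d n w j = (if j \<in> {1..n} \<and> 0 < w j then d else 0)"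

definition unit_neighbour :: "(nat \<Rightarrow> nat) \<Rightarrow> nat \<Rightarrow> nat \<Rightarrow> nat" where
  "unit_neighbour z r = z(r := if z r = 0 then 1 else z r - 1)"

lemma ex_pair_min_sum:
  fixes f :: "'a \<Rightarrow> 'b::linordered_ab_group_add"
  assumes "finite I" "j\<^sub>0 \<in> I" "k\<^sub>0 \<in> I" "j\<^sub>0 \<noteq> k\<^sub>0"
  shows "\<exists>p\<in>I. \<exists>q\<in>I. p \<noteq> q \<and> (\<forall>j\<in>I. \<forall>k\<in>I. j \<noteq> k \<longrightarrow> f p + f q \<le> f j + f k)"
proof -
  define S where "S = {(j, k). j \<in> I \<and> k \<in> I \<and> j \<noteq> k}"
  define g where "g = (\<lambda>(j, k). f j + f k)"
  have "S \<subseteq> I \<times> I" unfolding S_def by auto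
  then have fin: "finite S" using assms(1) by (simp add: finite_subset)
  have ne: "S \<noteq> {}" using assms unfolding S_def by auto
  obtain p q where pq: "arg_min_on g S = (p, q)" by (cases "arg_min_on g S")
  then have "(p, q) \<in> S" using arg_min_if_finite(1)[OF fin ne, where f = g] by simp
  moreover have "g (p, q) \<le> g (j, k)" if "(j, k) \<in> S" for j k
    using arg_min_least[OF fin ne that, where f = g] pq by simp
  ultimately show ?thesis unfolding S_def g_def by auto
qed

lemma ex_pair_max_less_pair_sums:
  fixes f :: "'a \<Rightarrow> 'b::linordered_ab_group_add"
  assumes "finite I" "j\<^sub>0 \<in> I" "k\<^sub>0 \<in> I" "j\<^sub>0 \<noteq> k\<^sub>0" "\<forall>j\<in>I. 0 < f j"
  shows "\<exists>p\<in>I. \<exists>q\<in>I. p \<noteq> q \<and> (\<forall>j\<in>I. \<forall>k\<in>I. j \<noteq> k \<longrightarrow> max (f p) (f q) < f j + f k)"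
proof -
  obtain p q where pq: "p \<in> I" "q \<in> I" "p \<noteq> q"
    and min: "\<forall>j\<in>I. \<forall>k\<in>I. j \<noteq> k \<longrightarrow> f p + f q \<le> f j + f k"
    using ex_pair_min_sum[OF assms(1-4)] by blast
  have "max (f p) (f q) < f p + f q"
    using pq assms(5) by (simp add: max_def)
  with pq min show ?thesis by (meson less_le_trans)
qed

lemma not_can_eliminate_other_column:
  assumes "\<not> can_eliminate m n A j"
  shows "\<exists>k\<in>{1..n}. k \<noteq> j"
  using assms unfolding can_eliminate_def by blast

lemma not_can_eliminate_two_rows_opposite_signs:
  assumes "\<not> can_eliminate 2 n A j"
  shows "A 1 j * A 2 j < 0"
proof -
  have rows: "{1..2::nat} = {1, 2}" by auto
  obtain i i' where "i \<in> {1, 2}" "0 < A i j" "i' \<in> {1, 2}" "A i' j < 0"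
    using assms unfolding can_eliminate_def rows by blast
  then have "0 < A 1 j \<and> A 2 j < 0 \<or> A 1 j < 0 \<and> 0 < A 2 j" by auto
  then show ?thesis by (auto simp: mult_pos_neg mult_neg_pos)
qed

lemma not_adjacent_if_distinct_single_deviations:
  assumes "diff_coords n x z = {u}" "diff_coords n y z = {v}" "u \<noteq> v"
  shows "\<not> adjacent n x y"
proof -
  have "u \<in> diff_coords n x z" "u \<notin> diff_coords n y z"
    and "v \<in> diff_coords n y z" "v \<notin> diff_coords n x z"
    using assms by auto
  then have "{u, v} \<subseteq> diff_coords n x y"
    unfolding diff_coords_def by auto
  then have "card {u, v} \<le> card (diff_coords n x y)"
    by (intro card_mono) (auto simp: diff_coords_def)
  then show ?thesis
    using assms(3) unfolding adjacent_def diff_coords_def by simp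
qed

lemma rtrancl_sol_edges_diff_coords_eq:
  assumes single: "\<forall>x\<in>R. \<exists>j. diff_coords n x z = {j}"
    and "(x, y) \<in> (sol_edges n R)\<^sup>*"
  shows "diff_coords n y z = diff_coords n x z"
  using assms(2)
proof (induction rule: rtrancl_induct)
  case (step y y')
  then have "y \<in> R" "y' \<in> R" "adjacent n y y'"
    unfolding sol_edges_def by auto
  with single not_adjacent_if_distinct_single_deviations
  have "diff_coords n y' z = diff_coords n y z" by metis
  with step.IH show ?case by simp
qed simp

lemma not_sol_graph_connected_if_single_deviations:
  assumes "\<forall>x\<in>R. \<exists>j. diff_coords n x z = {j}"
    and "x \<in> R" "y \<in> R" "diff_coords n x z \<noteq> diff_coords n y z"
  shows "\<not> sol_graph_connected n R"
  using assms rtrancl_sol_edges_diff_coords_eq unfolding sol_graph_connected_def by metis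

lemma wdist_eq_0_if_no_diff_coords:
  assumes "diff_coords n x y = {}"
  shows "wdist n w x y = 0"
  using assms unfolding wdist_def diff_coords_def by (intro sum.neutral) auto

lemma wdist_ge_two_diff_coords:
  assumes "j \<in> diff_coords n x y" "k \<in> diff_coords n x y" "j \<noteq> k"
  shows "\<bar>w j\<bar> + \<bar>w k\<bar> \<le> wdist n w x y"
proof -
  have "\<bar>w i\<bar> \<le> \<bar>w i\<bar> * \<bar>real (x i) - real (y i)\<bar>" if "x i \<noteq> y i" for i
  proof -
    from that have "1 \<le> \<bar>real (x i) - real (y i)\<bar>" by linarith
    then show ?thesis using mult_left_mono[of 1 _ "\<bar>w i\<bar>"] by simp
  qed
  then have "\<bar>w j\<bar> + \<bar>w k\<bar> \<le> (\<Sum>i\<in>{j, k}. \<bar>w i\<bar> * \<bar>real (x i) - real (y i)\<bar>)"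
    using assms unfolding diff_coords_def by (auto intro: add_mono)
  also have "\<dots> \<le> wdist n w x y"
    unfolding wdist_def using assms unfolding diff_coords_def by (intro sum_mono2) auto
  finally show ?thesis .
qed

lemma single_deviation_if_wdist_bounds:
  assumes pairs: "\<forall>j\<in>{1..n}. \<forall>k\<in>{1..n}. j \<noteq> k \<longrightarrow> t < \<bar>a j\<bar> + \<bar>a k\<bar>"
    and "wdist n a x z \<le> t" "0 < wdist n c x z"
  shows "\<exists>j. diff_coords n x z = {j}"
proof -
  obtain j where j: "j \<in> diff_coords n x z"
    using assms(3) wdist_eq_0_if_no_diff_coords by fastforce
  have "k = j" if "k \<in> diff_coords n x z" for k
    using pairs assms(2) j that wdist_ge_two_diff_coords[of j n x z k a]
    unfolding diff_coords_def by force
  with j show ?thesis by blast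
qed

lemma unit_neighbour_in_Dpts:
  assumes "z \<in> Dpts d n" "1 \<le> d" "r \<in> {1..n}"
  shows "unit_neighbour z r \<in> Dpts d n"
proof -
  have "z r \<le> d" using assms unfolding Dpts_def by auto
  then have "(if z r = 0 then 1 else z r - 1) \<le> d" using assms(2) by auto
  with assms(1,3) show ?thesis unfolding Dpts_def unit_neighbour_def by auto
qed

lemma diff_coords_unit_neighbour:
  assumes "r \<in> {1..n}"
  shows "diff_coords n (unit_neighbour z r) z = {r}"
  using assms unfolding diff_coords_def unit_neighbour_def by auto

lemma wdist_unit_neighbour:
  assumes "r \<in> {1..n}"
  shows "wdist n w (unit_neighbour z r) z = \<bar>w r\<bar>"
proof -
  have "\<bar>w j\<bar> * \<bar>real (unit_neighbour z r j) - real (z j)\<bar> = (if j = r then \<bar>w r\<bar> else 0)" for j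
    unfolding unit_neighbour_def by auto
  then have "wdist n w (unit_neighbour z r) z = (\<Sum>j\<in>{1..n}. if j = r then \<bar>w r\<bar> else 0)"
    unfolding wdist_def by (intro sum.cong) auto
  with assms show ?thesis by simp
qed

lemma sign_corner_in_Dpts: "sign_corner d n w \<in> Dpts d n"
  unfolding sign_corner_def Dpts_def by auto

lemma sum_sign_corner_minus_sum:
  assumes "x \<in> Dpts d n"
  shows "(\<Sum>j=1..n. w j * real (sign_corner d n w j)) - (\<Sum>j=1..n. w j * real (x j))
    = wdist n w x (sign_corner d n w)"
  unfolding wdist_def sum_subtractf[symmetric]
proof (rule sum.cong)
  fix j assume j: "j \<in> {1..n}"
  then have "real (x j) \<le> real d" using assms unfolding Dpts_def by auto
  with j show "w j * real (sign_corner d n w j) - w j * real (x j)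
      = \<bar>w j\<bar> * \<bar>real (x j) - real (sign_corner d n w j)\<bar>"
    unfolding sign_corner_def
    by (cases "0 < w j") (simp_all add: abs_of_nonpos right_diff_distrib)
qed simp

lemma sign_corner_opposite_signs:
  assumes "\<forall>j\<in>{1..n}. a j * c j < 0"
  shows "sign_corner d n (\<lambda>j. - c j) = sign_corner d n a"
proof
  fix j
  show "sign_corner d n (\<lambda>j. - c j) j = sign_corner d n a j"
    using assms zero_less_mult_iff[of "a j" "c j"] mult_less_0_iff[of "a j" "c j"]
    unfolding sign_corner_def by (cases "j \<in> {1..n}") auto
qed

lemma mem_Rsol_two_rows_around_sign_corner:
  assumes "\<forall>j\<in>{1..n}. A 1 j * A 2 j < 0"
    and z: "z = sign_corner d n (A 1)"
  shows "x \<in> Rsol d 2 n A (\<lambda>i. if i = 1 then (\<Sum>j=1..n. A 1 j * real (z j)) - t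
                                  else (\<Sum>j=1..n. A 2 j * real (z j)) + s)
    \<longleftrightarrow> x \<in> Dpts d n \<and> wdist n (A 1) x z \<le> t \<and> s \<le> wdist n (A 2) x z"
proof -
  have rows: "{1..2::nat} = {1, 2}" by auto
  have "z = sign_corner d n (\<lambda>j. - A 2 j)"
    using sign_corner_opposite_signs[OF assms(1)] z by simp
  then have "x \<in> Dpts d n \<Longrightarrow>
      (\<Sum>j=1..n. A 2 j * real (x j)) - (\<Sum>j=1..n. A 2 j * real (z j)) = wdist n (A 2) x z"
    using sum_sign_corner_minus_sum[of x d n "\<lambda>j. - A 2 j"]
    by (simp add: sum_negf wdist_def)
  moreover have "x \<in> Dpts d n \<Longrightarrow>
      (\<Sum>j=1..n. A 1 j * real (z j)) - (\<Sum>j=1..n. A 1 j * real (x j)) = wdist n (A 1) x z"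
    using sum_sign_corner_minus_sum z by simp
  ultimately show ?thesis
    unfolding Rsol_def rows by auto
qed

theorem lemma3:
  fixes d n :: nat and A :: "nat \<Rightarrow> nat \<Rightarrow> real"
  assumes "d \<ge> 1"
    and "n \<ge> 1"
    and "\<forall>j\<in>{1..n}. \<not> can_eliminate 2 n A j"
  shows "\<exists>b :: nat \<Rightarrow> real. \<not> sol_graph_connected n (Rsol d 2 n A b)"
proof -
  have opp: "\<forall>j\<in>{1..n}. A 1 j * A 2 j < 0"
    using assms(3) not_can_eliminate_two_rows_opposite_signs by blast
  obtain k where "k \<in> {1..n}" "k \<noteq> 1"
    using assms(2,3) not_can_eliminate_other_column by fastforce
  moreover have "\<forall>j\<in>{1..n}. 0 < \<bar>A 1 j\<bar>"
    using opp by fastforce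
  ultimately obtain p q where pq: "p \<in> {1..n}" "q \<in> {1..n}" "p \<noteq> q"
    and pairs: "\<forall>j\<in>{1..n}. \<forall>k\<in>{1..n}. j \<noteq> k \<longrightarrow>
      max \<bar>A 1 p\<bar> \<bar>A 1 q\<bar> < \<bar>A 1 j\<bar> + \<bar>A 1 k\<bar>"
    using ex_pair_max_less_pair_sums[of "{1..n}" 1 k "\<lambda>j. \<bar>A 1 j\<bar>"] assms(2) by auto
  define z where "z = sign_corner d n (A 1)"
  define t where "t = max \<bar>A 1 p\<bar> \<bar>A 1 q\<bar>"
  define s where "s = min \<bar>A 2 p\<bar> \<bar>A 2 q\<bar>"
  define R where "R = Rsol d 2 n A (\<lambda>i. if i = 1 then (\<Sum>j=1..n. A 1 j * real (z j)) - t
                                        else (\<Sum>j=1..n. A 2 j * real (z j)) + s)"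
  have R_iff: "x \<in> R \<longleftrightarrow> x \<in> Dpts d n \<and> wdist n (A 1) x z \<le> t \<and> s \<le> wdist n (A 2) x z" for x
    unfolding R_def using mem_Rsol_two_rows_around_sign_corner[OF opp z_def] .
  have "0 < s"
    using opp[rule_format, OF pq(1)] opp[rule_format, OF pq(2)] unfolding s_def by auto
  then have single: "\<forall>x\<in>R. \<exists>j. diff_coords n x z = {j}"
    using R_iff pairs single_deviation_if_wdist_bounds unfolding t_def by (meson less_le_trans)
  have neighbours: "unit_neighbour z r \<in> R" if "r \<in> {p, q}" for r
    using that pq assms(1) sign_corner_in_Dpts unfolding R_iff z_def t_def s_def
    by (auto simp: unit_neighbour_in_Dpts wdist_unit_neighbour)
  have "diff_coords n (unit_neighbour z p) z \<noteq> diff_coords n (unit_neighbour z q) z"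
    using pq by (simp add: diff_coords_unit_neighbour)
  then show ?thesis
    using not_sol_graph_connected_if_single_deviations[OF single] neighbours unfolding R_def by blast
qed

end
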